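(* For every fixed $t>0$, assume the symmetric kernel $k_t$ satisfies $\int\int k_t(y,x)^2\,p_H(y)\,p_H(x)\,dy\,dx=c_t^2<+\infty$, and let $K_t:\mathbb{H}\to\mathbb{H}$ be the continuous linear operator defined by $\langle K_tu,v\rangle_{\mathbb{H}}=\int_{\mathbb{R}^\nu}\int_{\mathbb{R}^\nu}k_t(y,x)\,u(x)\,v(y)\,p_H(y)\,p_H(x)\,dy\,dx$ for all $u,v\in\mathbb{H}$. Then: (a) for all $u,v\in\mathbb{H}$, $\langle K_tu,v\rangle_{\mathbb{H}}=\sum_{\alpha\in\mathbb{N}}b_\alpha(t)\langle u,\psi_\alpha\rangle_{\mathbb{H}}\langle v,\psi_\alpha\rangle_{\mathbb{H}}$, $K_t$ is a positive symmetric operator on $\mathbb{H}$, and $K_tu=\sum_{\alpha}b_\alpha(t)\langle u,\psi_\alpha\rangle_{\mathbb{H}}\psi_\alpha$; (b) for all $\alpha\in\mathbb{N}$, $\psi_\alpha\in\mathbb{H}$ is an eigenfunction, independent of $t$, of $K_t$ for the positive eigenvalue $b_\alpha(t)=\exp(-\lambda_\alpha t)$: $K_t\psi_\alpha=b_\alpha(t)\psi_\alpha$, where $1=b_0(t)>b_1(t)\ge b_2(t)\ge\cdots$; consequently $\langle K_t\psi_\alpha,\psi_\beta\rangle_{\mathbb{H}}=b_\alpha(t)\delta_{\alpha\beta}$ for all $\alpha,\beta$; (c) for all $u\in\mathbb{H}$, $\|K_tu\|_{\mathbb{H}}^2=\sum_\alpha b_\alpha(t)^2\langle u,\psi_\alpha\rangle_{\mathbb{H}}^2$,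 and $\sum_{\alpha\in\mathbb{N}}\|K_t\psi_\alpha\|_{\mathbb{H}}^2=c_t^2=\sum_\alpha b_\alpha(t)^2<+\infty$; therefore $K_t$ is a Hilbert–Schmidt operator on $\mathbb{H}$.
   Context: Let $\nu\ge1$, $n_d>1$, and $\eta^1,\dots,\eta^{n_d}\in\mathbb{R}^\nu$ with $\frac1{n_d}\sum_j\eta^j=0$, $\frac1{n_d-1}\sum_j\eta^j(\eta^j)^T=I_\nu$. Put $s=\big(\frac{4}{n_d(2+\nu)}\big)^{1/(\nu+4)}$, $\hat s=s/\sqrt{s^2+(n_d-1)/n_d}$, $p_H(\eta)=\frac1{n_d}\sum_{j}(\sqrt{2\pi}\,\hat s)^{-\nu}\exp(-\frac{1}{2\hat s^2}\|\eta-\frac{\hat s}{s}\eta^j\|^2)$ (strictly positive, continuous) and $\Phi=-\log\big((\sqrt{2\pi}\hat s)^{\nu}p_H\big)$. Let $\mathbb{H}=L^2(\mathbb{R}^\nu;p_H)$ with $\langle u,v\rangle_{\mathbb{H}}=\int uv\,p_H\,dy$. Let $\hat L(q)=\mathcal{V}q-\frac12\nabla^2q$ with $\mathcal{V}=\frac18\|\nabla\Phi\|^2-\frac14\nabla^2\Phi$, with condition at infinity $\lim_{\|y\|\to\infty}p_H^{1/2}\|\nabla(p_H^{-1/2}q)\|=0$. Standing hypotheses: $\hat L$ has countable spectrum $0=\lambda_0<\lambda_1\le\lambda_2\le\cdots$ with finite multiplicities, and its eigenfunctions $\{q_\alpha\}$ form an orthonormal Hilbert basis of $L^2(\mathbb{R}^\nu)$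 with $q_0=p_H^{1/2}$. Put $\psi_\alpha=q_\alpha p_H^{-1/2}$ (an orthonormal Hilbert basis of $\mathbb{H}$ with $\psi_0\equiv1$). Let $\rho(y,t\,|\,x,0)$ be the transition density of the Itô SDE $dY=-\frac12\nabla\Phi(Y)\,dt+dW$ ($W$ a standard $\nu$-dimensional Wiener process) from $Y(0)=x$, assumed to admit for $t>0$ the representation $\rho(y,t\,|\,x,0)=p_H(y)^{1/2}p_H(x)^{-1/2}\sum_{\alpha}e^{-\lambda_\alpha t}q_\alpha(y)q_\alpha(x)$. Define $k_t(y,x)=\rho(y,t\,|\,x,0)/p_H(y)$ (symmetric in $(y,x)$) and $b_\alpha(t)=e^{-\lambda_\alpha t}$. *)

theory Defs
  imports "HOL-Analysis.Analysis"
begin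

text \<open>Data points are indexed by j < nd (i.e. eta^{j+1} of the paper is eta j).
  The dimension nu is CARD('n).\<close>

definition bw_s :: "nat \<Rightarrow> nat \<Rightarrow> real" where
  "bw_s nu nd = (4 / (real nd * (2 + real nu))) powr (1 / (real nu + 4))"

definition bw_hat_s :: "nat \<Rightarrow> nat \<Rightarrow> real" where
  "bw_hat_s nu nd = bw_s nu nd / sqrt ((bw_s nu nd)\<^sup>2 + (real nd - 1) / real nd)"

definition pH :: "nat \<Rightarrow> (nat \<Rightarrow> real ^ 'n) \<Rightarrow> real ^ 'n \<Rightarrow> real" where
  "pH nd eta y =
     (let nu = CARD('n); s = bw_s nu nd; sh = bw_hat_s nu nd in
      (1 / real nd) * (\<Sum>j<nd. (sqrt (2 * pi) * sh) powi (- int nu) *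
         exp (- (1 / (2 * sh\<^sup>2)) * (norm (y - (sh / s) *\<^sub>R eta j))\<^sup>2)))"

definition Phi :: "nat \<Rightarrow> (nat \<Rightarrow> real ^ 'n) \<Rightarrow> real ^ 'n \<Rightarrow> real" where
  "Phi nd eta y = - ln ((sqrt (2 * pi) * bw_hat_s CARD('n) nd) ^ CARD('n) * pH nd eta y)"

definition pderiv_dir :: "('a::euclidean_space \<Rightarrow> real) \<Rightarrow> 'a \<Rightarrow> 'a \<Rightarrow> real" where
  "pderiv_dir f y i = deriv (\<lambda>r. f (y + r *\<^sub>R i)) 0"

definition grad_norm :: "('a::euclidean_space \<Rightarrow> real) \<Rightarrow> 'a \<Rightarrow> real" where
  "grad_norm f y = sqrt (\<Sum>i\<in>Basis. (pderiv_dir f y i)\<^sup>2)"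

definition laplacian :: "('a::euclidean_space \<Rightarrow> real) \<Rightarrow> 'a \<Rightarrow> real" where
  "laplacian f y = (\<Sum>i\<in>Basis. deriv (\<lambda>r. pderiv_dir f (y + r *\<^sub>R i) i) 0)"

definition twice_part_diff :: "('a::euclidean_space \<Rightarrow> real) \<Rightarrow> bool" where
  "twice_part_diff f \<longleftrightarrow>
     (\<forall>y. \<forall>i\<in>Basis. (\<lambda>r. f (y + r *\<^sub>R i)) differentiable (at 0)
        \<and> (\<lambda>r. pderiv_dir f (y + r *\<^sub>R i) i) differentiable (at 0))"

definition potV :: "nat \<Rightarrow> (nat \<Rightarrow> real ^ 'n) \<Rightarrow> real ^ 'n \<Rightarrow> real" where
  "potV nd eta y = 1/8 * (grad_norm (Phi nd eta) y)\<^sup>2 - 1/4 * laplacian (Phi nd eta) y"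

definition Lhat :: "nat \<Rightarrow> (nat \<Rightarrow> real ^ 'n) \<Rightarrow> (real ^ 'n \<Rightarrow> real) \<Rightarrow> real ^ 'n \<Rightarrow> real" where
  "Lhat nd eta q y = potV nd eta y * q y - 1/2 * laplacian q y"

section \<open>The weighted L^2 space H = L^2(R^nu; p_H) (realised on functions, equality a.e.)\<close>

definition muH :: "nat \<Rightarrow> (nat \<Rightarrow> real ^ 'n) \<Rightarrow> (real ^ 'n) measure" where
  "muH nd eta = density lborel (\<lambda>y. ennreal (pH nd eta y))"

definition inL2 :: "'a measure \<Rightarrow> ('a \<Rightarrow> real) \<Rightarrow> bool" where
  "inL2 M u \<longleftrightarrow> u \<in> borel_measurable M \<and> integrable M (\<lambda>x. (u x)\<^sup>2)"

definition ipL2 :: "'a measure \<Rightarrow> ('a \<Rightarrow> real) \<Rightarrow> ('a \<Rightarrow> real) \<Rightarrow> real" where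
  "ipL2 M u v = (\<integral>x. u x * v x \<partial>M)"

definition normL2 :: "'a measure \<Rightarrow> ('a \<Rightarrow> real) \<Rightarrow> real" where
  "normL2 M u = sqrt (ipL2 M u u)"

definition hilbert_basis :: "'a measure \<Rightarrow> (nat \<Rightarrow> 'a \<Rightarrow> real) \<Rightarrow> bool" where
  "hilbert_basis M e \<longleftrightarrow>
     (\<forall>a. inL2 M (e a)) \<and>
     (\<forall>a b. ipL2 M (e a) (e b) = (if a = b then 1 else 0)) \<and>
     (\<forall>u. inL2 M u \<longrightarrow>
        (\<lambda>N. normL2 M (\<lambda>x. u x - (\<Sum>a<N. ipL2 M u (e a) * e a x))) \<longlonglongrightarrow> 0)"

definition hilbert_schmidt :: "'a measure \<Rightarrow> (('a \<Rightarrow> real) \<Rightarrow> ('a \<Rightarrow> real)) \<Rightarrow> bool" where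
  "hilbert_schmidt M K \<longleftrightarrow>
     (\<forall>u. inL2 M u \<longrightarrow> inL2 M (K u)) \<and>
     (\<exists>e. hilbert_basis M e \<and> summable (\<lambda>a. (normL2 M (K (e a)))\<^sup>2))"

end

theory Submission
  imports Defs
begin

(* The functions psi_a = q_a / sqrt p_H form a Hilbert basis of H, since u |-> sqrt p_H * u is
   an isometry of H onto L^2(R^nu). In this basis the spectral representation of rho reads
   k_t(y, x) = sum_a b_a psi_a(y) psi_a(x) pointwise. For fixed x this is an orthonormal series
   in y with square-summable coefficients (evaluate the representation on the diagonal at time
   2t), so it converges in H to k_t(., x) and has squared norm sum_a b_a^2 psi_a(x)^2;
   integrating in x gives sum_a b_a^2 = c^2. Fubini turns the defining double integral of K_t
   into sum_a b_a <u, psi_a> <v, psi_a>, and all remaining claims follow from this diagonal form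
   of K_t by Parseval's identity. *)

section \<open>Real L2 spaces\<close>

lemma abs_mult_le_sum_squares: "\<bar>(a::real) * b\<bar> \<le> a\<^sup>2 + b\<^sup>2"
proof -
  have "2 * \<bar>a\<bar> * \<bar>b\<bar> \<le> a\<^sup>2 + b\<^sup>2"
    using sum_squares_bound[of "\<bar>a\<bar>" "\<bar>b\<bar>"] by simp
  moreover have "0 \<le> \<bar>a\<bar> * \<bar>b\<bar>" by simp
  ultimately show ?thesis unfolding abs_mult by linarith
qed

lemma inL2_measurable [measurable_dest]: "inL2 M f \<Longrightarrow> f \<in> borel_measurable M"
  unfolding inL2_def by simp

lemma inL2_integrable_power2: "inL2 M f \<Longrightarrow> integrable M (\<lambda>x. (f x)\<^sup>2)"
  unfolding inL2_def by simp

lemma inL2_integrable_mult: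
  assumes f: "inL2 M f" and g: "inL2 M g"
  shows "integrable M (\<lambda>x. f x * g x)"
proof (rule Bochner_Integration.integrable_bound)
  show "integrable M (\<lambda>x. (f x)\<^sup>2 + (g x)\<^sup>2)"
    using f g by (simp add: inL2_integrable_power2)
  show "AE x in M. norm (f x * g x) \<le> norm ((f x)\<^sup>2 + (g x)\<^sup>2)"
    using abs_mult_le_sum_squares by simp
qed (use f g in measurable)

lemma inL2_lincomb:
  assumes f: "inL2 M f" and g: "inL2 M g"
  shows "inL2 M (\<lambda>x. r * f x + s * g x)"
proof -
  have [measurable]: "f \<in> borel_measurable M" "g \<in> borel_measurable M"
    using f g by (simp_all add: inL2_measurable)
  have "integrable M (\<lambda>x. r\<^sup>2 * (f x)\<^sup>2 + (2 * r * s) * (f x * g x) + s\<^sup>2 * (g x)\<^sup>2)"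
    using f g by (simp add: inL2_integrable_power2 inL2_integrable_mult)
  then show ?thesis
    using f g unfolding inL2_def by (simp add: power2_eq_square algebra_simps)
qed

lemma inL2_diff: "inL2 M f \<Longrightarrow> inL2 M g \<Longrightarrow> inL2 M (\<lambda>x. f x - g x)"
  using inL2_lincomb[of M f g 1 "-1"] by simp

lemma inL2_add: "inL2 M f \<Longrightarrow> inL2 M g \<Longrightarrow> inL2 M (\<lambda>x. f x + g x)"
  using inL2_lincomb[of M f g 1 1] by simp

lemma inL2_cmult: "inL2 M f \<Longrightarrow> inL2 M (\<lambda>x. r * f x)"
  using inL2_lincomb[of M f f r 0] by simp

lemma inL2_sum:
  assumes "finite A" "\<And>a. a \<in> A \<Longrightarrow> inL2 M (e a)"
  shows "inL2 M (\<lambda>x. \<Sum>a\<in>A. d a * e a x)"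
  using assms
proof (induction A rule: finite_induct)
  case empty
  then show ?case by (simp add: inL2_def)
next
  case (insert a A)
  then show ?case using inL2_lincomb[of M "e a" _ "d a" 1] by simp
qed

lemma ipL2_commute: "ipL2 M f g = ipL2 M g f"
  unfolding ipL2_def by (simp add: mult.commute)

lemma ipL2_lincomb_left:
  assumes "inL2 M f" "inL2 M g" "inL2 M w"
  shows "ipL2 M (\<lambda>x. r * f x + s * g x) w = r * ipL2 M f w + s * ipL2 M g w"
proof -
  have "integrable M (\<lambda>x. f x * w x)" "integrable M (\<lambda>x. g x * w x)"
    using assms by (simp_all add: inL2_integrable_mult)
  then show ?thesis
    unfolding ipL2_def by (simp add: distrib_right mult.assoc)
qed

lemma ipL2_diff_left:
  "inL2 M f \<Longrightarrow> inL2 M g \<Longrightarrow> inL2 M w \<Longrightarrow>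
    ipL2 M (\<lambda>x. f x - g x) w = ipL2 M f w - ipL2 M g w"
  using ipL2_lincomb_left[of M f g w 1 "-1"] by simp

lemma ipL2_sum_left:
  assumes "finite A" "\<And>a. a \<in> A \<Longrightarrow> inL2 M (e a)" "inL2 M w"
  shows "ipL2 M (\<lambda>x. \<Sum>a\<in>A. d a * e a x) w = (\<Sum>a\<in>A. d a * ipL2 M (e a) w)"
proof -
  have "integrable M (\<lambda>x. e a x * w x)" if "a \<in> A" for a
    using assms that by (simp add: inL2_integrable_mult)
  then show ?thesis
    unfolding ipL2_def sum_distrib_right by (simp add: mult.assoc)
qed

lemma ipL2_self_nonneg: "ipL2 M f f \<ge> 0"
  unfolding ipL2_def by (rule integral_nonneg_AE) (simp add: zero_le_square)

lemma normL2_nonneg: "normL2 M f \<ge> 0"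
  unfolding normL2_def by (simp add: ipL2_self_nonneg)

lemma power2_normL2: "(normL2 M f)\<^sup>2 = ipL2 M f f"
  unfolding normL2_def by (simp add: ipL2_self_nonneg)

lemma power2_normL2_eq_integral: "(normL2 M f)\<^sup>2 = (\<integral>x. (f x)\<^sup>2 \<partial>M)"
  unfolding power2_normL2 ipL2_def by (simp add: power2_eq_square)

lemma normL2_eq_0_imp_AE_zero:
  assumes "inL2 M f" "normL2 M f = 0"
  shows "AE x in M. f x = 0"
proof -
  have "(\<integral>x. (f x)\<^sup>2 \<partial>M) = 0"
    using assms(2) power2_normL2_eq_integral[of M f] by simp
  then have "AE x in M. (f x)\<^sup>2 = 0"
    using integral_nonneg_eq_0_iff_AE[OF inL2_integrable_power2[OF assms(1)]] by simp
  then show ?thesis by simp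
qed

lemma discrim_le_of_nonneg_quadratic:
  fixes A B C :: real
  assumes nonneg: "\<And>r. 0 \<le> A - 2 * r * B + r\<^sup>2 * C" and "C \<ge> 0"
  shows "B\<^sup>2 \<le> A * C"
proof (cases "C = 0")
  case True
  have "B = 0"
  proof (rule ccontr)
    assume "B \<noteq> 0"
    then have "A - 2 * ((A + 1) / (2 * B)) * B = -1" by (simp add: field_simps)
    with nonneg[of "(A + 1) / (2 * B)"] True show False by simp
  qed
  then show ?thesis using True by simp
next
  case False
  with \<open>C \<ge> 0\<close> have "C > 0" by simp
  have "0 \<le> A - 2 * (B / C) * B + (B / C)\<^sup>2 * C" by (rule nonneg)
  also have "\<dots> = A - B\<^sup>2 / C" using \<open>C > 0\<close> by (simp add: power2_eq_square field_simps)
  finally show ?thesis using \<open>C > 0\<close> by (simp add: field_simps)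
qed

lemma ipL2_Cauchy_Schwarz:
  assumes f: "inL2 M f" and g: "inL2 M g"
  shows "\<bar>ipL2 M f g\<bar> \<le> normL2 M f * normL2 M g"
proof -
  have "0 \<le> ipL2 M f f - 2 * r * ipL2 M f g + r\<^sup>2 * ipL2 M g g" for r
  proof -
    let ?h = "\<lambda>x. 1 * f x + (- r) * g x"
    have h: "inL2 M ?h" using f g by (rule inL2_lincomb)
    have "ipL2 M ?h ?h = 1 * ipL2 M f ?h + (- r) * ipL2 M g ?h"
      by (rule ipL2_lincomb_left[OF f g h])
    also have "\<dots> = ipL2 M ?h f - r * ipL2 M ?h g"
      by (simp add: ipL2_commute)
    also have "\<dots> = (1 * ipL2 M f f + (- r) * ipL2 M g f) - r * (1 * ipL2 M f g + (- r) * ipL2 M g g)"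
      by (simp only: ipL2_lincomb_left[OF f g f] ipL2_lincomb_left[OF f g g])
    also have "\<dots> = ipL2 M f f - 2 * r * ipL2 M f g + r\<^sup>2 * ipL2 M g g"
      by (simp add: ipL2_commute[of M g f] power2_eq_square algebra_simps)
    finally show ?thesis using ipL2_self_nonneg[of M ?h] by simp
  qed
  then have "(ipL2 M f g)\<^sup>2 \<le> ipL2 M f f * ipL2 M g g"
    by (rule discrim_le_of_nonneg_quadratic) (rule ipL2_self_nonneg)
  then show ?thesis
    unfolding normL2_def by (metis real_sqrt_abs real_sqrt_le_mono real_sqrt_mult)
qed

lemma ipL2_tendsto_left:
  assumes g: "inL2 M g" and S: "\<And>N. inL2 M (S N)" and w: "inL2 M w"
    and lim: "(\<lambda>N. normL2 M (\<lambda>x. g x - S N x)) \<longlonglongrightarrow> 0"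
  shows "(\<lambda>N. ipL2 M (S N) w) \<longlonglongrightarrow> ipL2 M g w"
proof (rule LIM_zero_cancel, rule Lim_null_comparison)
  show "\<forall>\<^sub>F N in sequentially. norm (ipL2 M (S N) w - ipL2 M g w) \<le> normL2 M (\<lambda>x. g x - S N x) * normL2 M w"
  proof (intro always_eventually allI)
    fix N
    have "ipL2 M (S N) w - ipL2 M g w = - ipL2 M (\<lambda>x. g x - S N x) w"
      using ipL2_diff_left[OF g S w] by simp
    then show "norm (ipL2 M (S N) w - ipL2 M g w) \<le> normL2 M (\<lambda>x. g x - S N x) * normL2 M w"
      using ipL2_Cauchy_Schwarz[OF inL2_diff[OF g S] w] by simp
  qed
  show "(\<lambda>N. normL2 M (\<lambda>x. g x - S N x) * normL2 M w) \<longlonglongrightarrow> 0"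
    using tendsto_mult_left_zero[OF lim] .
qed

section \<open>Orthonormal series\<close>

lemma ipL2_sums_of_L2_convergent:
  assumes e: "\<And>a. inL2 M (e a)" and g: "inL2 M g"
    and lim: "(\<lambda>N. normL2 M (\<lambda>x. g x - (\<Sum>a<N. c a * e a x))) \<longlonglongrightarrow> 0"
    and w: "inL2 M w"
  shows "(\<lambda>a. c a * ipL2 M w (e a)) sums ipL2 M g w"
proof -
  have "(\<lambda>N. ipL2 M (\<lambda>x. \<Sum>a<N. c a * e a x) w) \<longlonglongrightarrow> ipL2 M g w"
    using lim by (intro ipL2_tendsto_left g w inL2_sum e finite_lessThan)
  moreover have "ipL2 M (\<lambda>x. \<Sum>a<N. c a * e a x) w = (\<Sum>a<N. c a * ipL2 M w (e a))" for N
    using w by (simp add: ipL2_sum_left e ipL2_commute[of M w])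
  ultimately show ?thesis
    unfolding sums_def by simp
qed

definition orthonormalL2 :: "'a measure \<Rightarrow> (nat \<Rightarrow> 'a \<Rightarrow> real) \<Rightarrow> bool" where
  "orthonormalL2 M e \<longleftrightarrow>
     (\<forall>a. inL2 M (e a)) \<and> (\<forall>a b. ipL2 M (e a) (e b) = (if a = b then 1 else 0))"

lemma orthonormalL2_inL2: "orthonormalL2 M e \<Longrightarrow> inL2 M (e a)"
  unfolding orthonormalL2_def by simp

lemma orthonormalL2_ipL2: "orthonormalL2 M e \<Longrightarrow> ipL2 M (e a) (e b) = (if a = b then 1 else 0)"
  unfolding orthonormalL2_def by simp

lemma hilbert_basis_orthonormalL2: "hilbert_basis M e \<Longrightarrow> orthonormalL2 M e"
  unfolding hilbert_basis_def orthonormalL2_def by simp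

lemma sums_Kronecker_unique:
  fixes f :: "nat \<Rightarrow> real"
  assumes "(\<lambda>a. f a * (if a = b then 1 else 0)) sums s"
  shows "s = f b"
proof -
  have "(\<lambda>a. f a * (if a = b then 1 else 0)) = (\<lambda>a. if a = b then f a else 0)"
    by (simp add: fun_eq_iff)
  with assms show ?thesis by (metis sums_single sums_unique2)
qed

lemma power2_normL2_orthonormal_sum:
  assumes e: "orthonormalL2 M e" and A: "finite A"
  shows "(normL2 M (\<lambda>x. \<Sum>a\<in>A. d a * e a x))\<^sup>2 = (\<Sum>a\<in>A. (d a)\<^sup>2)"
proof -
  let ?T = "\<lambda>x. \<Sum>a\<in>A. d a * e a x"
  have T: "inL2 M ?T" using A by (intro inL2_sum orthonormalL2_inL2[OF e])
  have coeff: "ipL2 M (e a) ?T = d a" if "a \<in> A" for a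
  proof -
    have "ipL2 M (e a) ?T = (\<Sum>b\<in>A. d b * ipL2 M (e b) (e a))"
      using A by (subst ipL2_commute) (intro ipL2_sum_left orthonormalL2_inL2[OF e])
    also have "\<dots> = d a"
      using A that by (simp add: orthonormalL2_ipL2[OF e] if_distrib cong: if_cong)
    finally show ?thesis .
  qed
  have "ipL2 M ?T ?T = (\<Sum>a\<in>A. d a * ipL2 M (e a) ?T)"
    using A T by (intro ipL2_sum_left orthonormalL2_inL2[OF e])
  then show ?thesis
    unfolding power2_normL2 by (simp add: coeff power2_eq_square)
qed

lemma inL2_Fatou:
  assumes f: "\<And>m. inL2 M (f m)"
    and lim: "\<And>x. x \<in> space M \<Longrightarrow> (\<lambda>m. f m x) \<longlonglongrightarrow> h x"
    and bound: "\<And>m. m \<ge> N \<Longrightarrow> (normL2 M (f m))\<^sup>2 \<le> B"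
  shows "inL2 M h" "(normL2 M h)\<^sup>2 \<le> B"
proof -
  have [measurable]: "f m \<in> borel_measurable M" for m
    using f by (rule inL2_measurable)
  have [measurable]: "h \<in> borel_measurable M"
    using lim by (rule borel_measurable_LIMSEQ_real[where u = f]) measurable
  have "B \<ge> 0" using order_trans[OF zero_le_power2 bound[OF order_refl]] .
  have "(\<integral>\<^sup>+x. ennreal ((h x)\<^sup>2) \<partial>M) = (\<integral>\<^sup>+x. liminf (\<lambda>m. ennreal ((f m x)\<^sup>2)) \<partial>M)"
  proof (rule nn_integral_cong)
    fix x assume "x \<in> space M"
    then have "(\<lambda>m. ennreal ((f m x)\<^sup>2)) \<longlonglongrightarrow> ennreal ((h x)\<^sup>2)"
      by (intro tendsto_ennrealI tendsto_power lim)
    from lim_imp_Liminf[OF _ this]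
    show "ennreal ((h x)\<^sup>2) = liminf (\<lambda>m. ennreal ((f m x)\<^sup>2))"
      by simp
  qed
  also have "\<dots> \<le> liminf (\<lambda>m. \<integral>\<^sup>+x. ennreal ((f m x)\<^sup>2) \<partial>M)"
    by (rule nn_integral_liminf) measurable
  also have "\<dots> \<le> liminf (\<lambda>m. ennreal B)"
  proof (intro Liminf_mono eventually_sequentiallyI)
    fix m assume "N \<le> m"
    have "(\<integral>\<^sup>+x. ennreal ((f m x)\<^sup>2) \<partial>M) = ennreal ((normL2 M (f m))\<^sup>2)"
      using inL2_integrable_power2[OF f]
      by (simp add: nn_integral_eq_integral power2_normL2_eq_integral)
    also have "\<dots> \<le> ennreal B" using bound[OF \<open>N \<le> m\<close>] by (rule ennreal_leI)
    finally show "(\<integral>\<^sup>+x. ennreal ((f m x)\<^sup>2) \<partial>M) \<le> ennreal B" .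
  qed
  finally have nn: "(\<integral>\<^sup>+x. ennreal ((h x)\<^sup>2) \<partial>M) \<le> ennreal B"
    by (simp add: Liminf_const)
  then have int: "integrable M (\<lambda>x. (h x)\<^sup>2)"
    by (intro integrableI_nonneg) (auto simp: top.not_eq_extremum intro: le_less_trans)
  then show "inL2 M h" unfolding inL2_def by simp
  have "ennreal ((normL2 M h)\<^sup>2) \<le> ennreal B"
    using nn int by (simp add: nn_integral_eq_integral power2_normL2_eq_integral)
  then show "(normL2 M h)\<^sup>2 \<le> B" using \<open>B \<ge> 0\<close> by (simp add: ennreal_le_iff)
qed

lemma orthonormal_series_L2:
  assumes e: "orthonormalL2 M e" and c: "summable (\<lambda>a. (c a)\<^sup>2)"
    and g: "\<And>x. x \<in> space M \<Longrightarrow> (\<lambda>a. c a * e a x) sums g x"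
  shows "inL2 M g" "(\<lambda>N. normL2 M (\<lambda>x. g x - (\<Sum>a<N. c a * e a x))) \<longlonglongrightarrow> 0"
proof -
  define S where "S N x = (\<Sum>a<N. c a * e a x)" for N x
  define T where "T N = (\<Sum>a. (c a)\<^sup>2) - (\<Sum>a<N. (c a)\<^sup>2)" for N
  have S: "inL2 M (S N)" for N
    unfolding S_def by (intro inL2_sum orthonormalL2_inL2[OF e] finite_lessThan)
  have T: "T \<longlonglongrightarrow> 0"
    unfolding T_def using tendsto_diff[OF tendsto_const summable_LIMSEQ[OF c], of "\<Sum>a. (c a)\<^sup>2"] by simp
  \<comment> \<open>Fatou's lemma in m carries the Pythagorean tail bound over to the pointwise limit.\<close>
  have tail: "inL2 M (\<lambda>x. g x - S N x) \<and> (normL2 M (\<lambda>x. g x - S N x))\<^sup>2 \<le> T N" for N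
  proof -
    have "(normL2 M (\<lambda>x. S m x - S N x))\<^sup>2 \<le> T N" if "N \<le> m" for m
    proof -
      have "(\<lambda>x. S m x - S N x) = (\<lambda>x. \<Sum>a\<in>{N..<m}. c a * e a x)"
        unfolding S_def using that by (simp add: fun_eq_iff sum_diff_nat_ivl flip: atLeast0LessThan)
      then have "(normL2 M (\<lambda>x. S m x - S N x))\<^sup>2 = (\<Sum>a<m. (c a)\<^sup>2) - (\<Sum>a<N. (c a)\<^sup>2)"
        using that by (simp add: power2_normL2_orthonormal_sum[OF e] sum_diff_nat_ivl flip: atLeast0LessThan)
      also have "\<dots> \<le> T N"
        unfolding T_def using c by (simp add: sum_le_suminf)
      finally show ?thesis .
    qed
    moreover have "(\<lambda>m. S m x - S N x) \<longlonglongrightarrow> g x - S N x" if "x \<in> space M" for x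
      using g[OF that] unfolding S_def sums_def by (intro tendsto_diff tendsto_const)
    ultimately show ?thesis
      using inL2_Fatou[of M "\<lambda>m x. S m x - S N x" "\<lambda>x. g x - S N x" N "T N"]
      by (simp add: inL2_diff S)
  qed
  have "inL2 M (\<lambda>x. (g x - S 0 x) + S 0 x)"
    using tail S by (intro inL2_add) auto
  then show "inL2 M g" by simp
  show "(\<lambda>N. normL2 M (\<lambda>x. g x - (\<Sum>a<N. c a * e a x))) \<longlonglongrightarrow> 0"
  proof (rule real_tendsto_sandwich[where f = "\<lambda>_. 0" and h = "\<lambda>N. sqrt (T N)"])
    show "\<forall>\<^sub>F N in sequentially. 0 \<le> normL2 M (\<lambda>x. g x - (\<Sum>a<N. c a * e a x))"
      by (simp add: normL2_nonneg)
    show "\<forall>\<^sub>F N in sequentially. normL2 M (\<lambda>x. g x - (\<Sum>a<N. c a * e a x)) \<le> sqrt (T N)"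
      using tail unfolding S_def by (intro always_eventually allI real_le_rsqrt) auto
    show "(\<lambda>N. sqrt (T N)) \<longlonglongrightarrow> 0"
      using tendsto_real_sqrt[OF T] by simp
  qed simp
qed

lemma orthonormal_series_ipL2_sums:
  assumes e: "orthonormalL2 M e" and c: "summable (\<lambda>a. (c a)\<^sup>2)"
    and g: "\<And>x. x \<in> space M \<Longrightarrow> (\<lambda>a. c a * e a x) sums g x"
    and w: "inL2 M w"
  shows "(\<lambda>a. c a * ipL2 M w (e a)) sums ipL2 M g w"
  by (rule ipL2_sums_of_L2_convergent[OF orthonormalL2_inL2[OF e] orthonormal_series_L2[OF e c g] w])

lemma orthonormal_series_power2_normL2_sums:
  assumes e: "orthonormalL2 M e" and c: "summable (\<lambda>a. (c a)\<^sup>2)"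
    and g: "\<And>x. x \<in> space M \<Longrightarrow> (\<lambda>a. c a * e a x) sums g x"
  shows "(\<lambda>a. (c a)\<^sup>2) sums (normL2 M g)\<^sup>2"
proof -
  have coeff: "ipL2 M g (e b) = c b" for b
    using orthonormal_series_ipL2_sums[OF e c g orthonormalL2_inL2[OF e, of b]]
    by (intro sums_Kronecker_unique) (simp add: orthonormalL2_ipL2[OF e] eq_commute)
  show ?thesis
    using orthonormal_series_ipL2_sums[OF e c g orthonormal_series_L2(1)[OF e c g]]
    unfolding power2_normL2 by (simp add: coeff power2_eq_square)
qed

lemma hilbert_basis_expansion:
  "hilbert_basis M e \<Longrightarrow> inL2 M u \<Longrightarrow>
     (\<lambda>N. normL2 M (\<lambda>x. u x - (\<Sum>a<N. ipL2 M u (e a) * e a x))) \<longlonglongrightarrow> 0"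
  unfolding hilbert_basis_def by simp

lemma hilbert_basis_Parseval:
  assumes e: "hilbert_basis M e" and u: "inL2 M u" and w: "inL2 M w"
  shows "(\<lambda>a. ipL2 M u (e a) * ipL2 M w (e a)) sums ipL2 M u w"
  using orthonormalL2_inL2[OF hilbert_basis_orthonormalL2[OF e]] u hilbert_basis_expansion[OF e u] w
  by (rule ipL2_sums_of_L2_convergent)

section \<open>Change of density\<close>

lemma ipL2_density:
  assumes [measurable]: "p \<in> borel_measurable N" "u \<in> borel_measurable N" "v \<in> borel_measurable N"
    and p: "\<And>x. p x \<ge> 0"
  shows "ipL2 (density N p) u v = ipL2 N (\<lambda>x. sqrt (p x) * u x) (\<lambda>x. sqrt (p x) * v x)"
  unfolding ipL2_def using p
  by (subst integral_density) (auto simp: algebra_simps intro!: Bochner_Integration.integral_cong)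

lemma borel_measurable_density [simp]: "borel_measurable (density N p) = borel_measurable N"
  by (rule measurable_cong_sets) simp_all

lemma inL2_density_iff:
  assumes [measurable]: "p \<in> borel_measurable N" and p: "\<And>x. p x > 0"
  shows "inL2 (density N p) u \<longleftrightarrow> inL2 N (\<lambda>x. sqrt (p x) * u x)"
proof -
  have "u \<in> borel_measurable N \<longleftrightarrow> (\<lambda>x. sqrt (p x) * u x) \<in> borel_measurable N"
  proof
    assume [measurable]: "(\<lambda>x. sqrt (p x) * u x) \<in> borel_measurable N"
    have "(\<lambda>x. (sqrt (p x) * u x) / sqrt (p x)) \<in> borel_measurable N" by measurable
    then show "u \<in> borel_measurable N" using p by (simp add: less_imp_neq[symmetric])
  next
    assume [measurable]: "u \<in> borel_measurable N"
    show "(\<lambda>x. sqrt (p x) * u x) \<in> borel_measurable N" by measurable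
  qed
  moreover have "integrable (density N p) (\<lambda>x. (u x)\<^sup>2) \<longleftrightarrow> integrable N (\<lambda>x. (sqrt (p x) * u x)\<^sup>2)"
    if [measurable]: "u \<in> borel_measurable N"
    using p by (subst integrable_density) (auto simp: less_imp_le power_mult_distrib)
  ultimately show ?thesis
    unfolding inL2_def by auto
qed

lemma hilbert_basis_density:
  assumes e: "hilbert_basis N e" and p_meas [measurable]: "p \<in> borel_measurable N" and p: "\<And>x. p x > 0"
  shows "hilbert_basis (density N p) (\<lambda>a x. e a x / sqrt (p x))"
proof -
  let ?M = "density N p" and ?psi = "\<lambda>a x. e a x / sqrt (p x)"
  have e': "orthonormalL2 N e" using e by (rule hilbert_basis_orthonormalL2)
  have [measurable]: "e a \<in> borel_measurable N" for a
    using orthonormalL2_inL2[OF e'] by (rule inL2_measurable)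
  have p_nz [simp]: "p x \<noteq> 0" for x
    using p[of x] by simp
  have ip: "ipL2 ?M u v = ipL2 N (\<lambda>x. sqrt (p x) * u x) (\<lambda>x. sqrt (p x) * v x)"
    if "u \<in> borel_measurable N" "v \<in> borel_measurable N" for u v
    using that p by (intro ipL2_density) (auto simp: less_imp_le)
  have "inL2 ?M (?psi a)" for a
    by (simp add: inL2_density_iff[OF p_meas p] orthonormalL2_inL2[OF e'])
  moreover have "ipL2 ?M (?psi a) (?psi b) = (if a = b then 1 else 0)" for a b
    by (simp add: ip orthonormalL2_ipL2[OF e'])
  moreover have "(\<lambda>n. normL2 ?M (\<lambda>x. u x - (\<Sum>a<n. ipL2 ?M u (?psi a) * ?psi a x))) \<longlonglongrightarrow> 0"
    if u: "inL2 ?M u" for u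
  proof -
    define w where "w = (\<lambda>x. sqrt (p x) * u x)"
    have [measurable]: "u \<in> borel_measurable N" using inL2_measurable[OF u] by simp
    have w: "inL2 N w" using u p unfolding w_def by (simp add: inL2_density_iff)
    have coeff: "ipL2 ?M u (?psi a) = ipL2 N w (e a)" for a
      by (simp add: ip w_def)
    have "sqrt (p x) * (u x - (\<Sum>a<n. ipL2 ?M u (?psi a) * ?psi a x)) =
        w x - (\<Sum>a<n. ipL2 N w (e a) * e a x)" for n x
      by (simp add: coeff w_def right_diff_distrib sum_distrib_left)
    then have "normL2 ?M (\<lambda>x. u x - (\<Sum>a<n. ipL2 ?M u (?psi a) * ?psi a x)) =
        normL2 N (\<lambda>x. w x - (\<Sum>a<n. ipL2 N w (e a) * e a x))" for n
      unfolding normL2_def by (subst ip) simp_all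
    then show ?thesis
      using hilbert_basis_expansion[OF e w] by simp
  qed
  ultimately show ?thesis
    unfolding hilbert_basis_def by blast
qed

section \<open>Kernels and operators diagonal in a Hilbert basis\<close>

lemma (in pair_sigma_finite) integrable_product_mult:
  fixes f :: "'a \<Rightarrow> real" and g :: "'b \<Rightarrow> real"
  assumes f: "integrable M1 f" and g: "integrable M2 g"
  shows "integrable (M1 \<Otimes>\<^sub>M M2) (\<lambda>z. f (fst z) * g (snd z))"
proof (rule Fubini_integrable)
  show "(\<lambda>z. f (fst z) * g (snd z)) \<in> borel_measurable (M1 \<Otimes>\<^sub>M M2)"
    using f g by measurable
  have "(\<lambda>x. \<integral>y. norm (f (fst (x, y)) * g (snd (x, y))) \<partial>M2) =
      (\<lambda>x. \<bar>f x\<bar> * (\<integral>y. \<bar>g y\<bar> \<partial>M2))"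
    by (simp add: abs_mult)
  then show "integrable M1 (\<lambda>x. \<integral>y. norm (f (fst (x, y)) * g (snd (x, y))) \<partial>M2)"
    using f by simp
  show "AE x in M1. integrable M2 (\<lambda>y. f (fst (x, y)) * g (snd (x, y)))"
    using g by simp
qed

locale diagonal_kernel = sigma_finite_measure M
  for M :: "'a measure" +
  fixes e :: "nat \<Rightarrow> 'a \<Rightarrow> real" and b :: "nat \<Rightarrow> real" and k :: "'a \<Rightarrow> 'a \<Rightarrow> real"
  assumes basis: "hilbert_basis M e"
    and kernel_sums: "\<And>y x. (\<lambda>a. b a * e a y * e a x) sums k y x"
    and column_summable: "\<And>x. summable (\<lambda>a. (b a * e a x)\<^sup>2)"
    and kernel_L2: "integrable (M \<Otimes>\<^sub>M M) (\<lambda>(y, x). (k y x)\<^sup>2)"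
begin

interpretation P: pair_sigma_finite M M
  by unfold_locales

lemma orthonormal: "orthonormalL2 M e"
  using basis by (rule hilbert_basis_orthonormalL2)

lemma basis_measurable [measurable]: "e a \<in> borel_measurable M"
  using orthonormalL2_inL2[OF orthonormal] by (rule inL2_measurable)

lemma kernel_measurable [measurable]: "(\<lambda>z. k (fst z) (snd z)) \<in> borel_measurable (M \<Otimes>\<^sub>M M)"
proof -
  have "k = (\<lambda>y x. \<Sum>a. b a * e a y * e a x)"
    using kernel_sums by (simp add: fun_eq_iff sums_unique)
  then show ?thesis by simp
qed

lemma column_power2_sums: "(\<lambda>a. (b a * e a x)\<^sup>2) sums (\<integral>y. (k y x)\<^sup>2 \<partial>M)"
proof -
  have "(\<lambda>a. (b a * e a x) * e a y) sums k y x" for y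
    using kernel_sums[of y x] by (simp add: ac_simps)
  from orthonormal_series_power2_normL2_sums[OF orthonormal column_summable this]
  show ?thesis by (simp add: power2_normL2_eq_integral)
qed

lemma coefficients_power2_sums: "(\<lambda>a. (b a)\<^sup>2) sums (\<integral>(y, x). (k y x)\<^sup>2 \<partial>(M \<Otimes>\<^sub>M M))"
proof -
  define F where "F x = (\<integral>y. (k y x)\<^sup>2 \<partial>M)" for x
  have F: "integrable M F"
    unfolding F_def using P.integrable_snd[OF kernel_L2] .
  have F_sums: "(\<lambda>a. (b a * e a x)\<^sup>2) sums F x" for x
    unfolding F_def by (rule column_power2_sums)
  have unit: "(\<integral>x. (e a x)\<^sup>2 \<partial>M) = 1" for a
    using power2_normL2_eq_integral[of M "e a"] orthonormalL2_ipL2[OF orthonormal, of a a]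
    by (simp add: power2_normL2)
  have "(\<lambda>N. \<integral>x. (\<Sum>a<N. (b a * e a x)\<^sup>2) \<partial>M) \<longlonglongrightarrow> (\<integral>x. F x \<partial>M)"
  proof (rule integral_dominated_convergence[where w = F])
    show "AE x in M. (\<lambda>N. \<Sum>a<N. (b a * e a x)\<^sup>2) \<longlonglongrightarrow> F x"
      using F_sums by (simp add: sums_def)
    show "AE x in M. norm (\<Sum>a<N. (b a * e a x)\<^sup>2) \<le> F x" for N
    proof (rule AE_I2)
      fix x
      have "(\<Sum>a<N. (b a * e a x)\<^sup>2) \<le> F x"
        using F_sums[of x] sum_le_suminf[of "\<lambda>a. (b a * e a x)\<^sup>2" "{..<N}"] by (simp add: sums_iff)
      then show "norm (\<Sum>a<N. (b a * e a x)\<^sup>2) \<le> F x"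
        by (simp add: sum_nonneg)
    qed
  qed (use F in measurable)
  moreover have "(\<integral>x. (\<Sum>a<N. (b a * e a x)\<^sup>2) \<partial>M) = (\<Sum>a<N. (b a)\<^sup>2)" for N
    using orthonormalL2_inL2[OF orthonormal]
    by (simp add: unit inL2_integrable_power2 power_mult_distrib)
  moreover have "(\<integral>x. F x \<partial>M) = (\<integral>(y, x). (k y x)\<^sup>2 \<partial>(M \<Otimes>\<^sub>M M))"
    unfolding F_def using P.integral_snd[OF kernel_L2] .
  ultimately show ?thesis
    by (simp add: sums_def)
qed

lemma bilinear_form_sums:
  assumes u: "inL2 M u" and v: "inL2 M v"
  shows "(\<lambda>a. b a * ipL2 M u (e a) * ipL2 M v (e a)) sums
    (\<integral>(y, x). k y x * u x * v y \<partial>(M \<Otimes>\<^sub>M M))"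
proof -
  have [measurable]: "u \<in> borel_measurable M" "v \<in> borel_measurable M"
    using u v by (simp_all add: inL2_measurable)
  have product: "integrable (M \<Otimes>\<^sub>M M) (\<lambda>(y, x). k y x * u x * v y)"
  proof (rule Bochner_Integration.integrable_bound)
    have "integrable (M \<Otimes>\<^sub>M M) (\<lambda>z. (v (fst z))\<^sup>2 * (u (snd z))\<^sup>2)"
      using u v by (intro P.integrable_product_mult inL2_integrable_power2)
    then show "integrable (M \<Otimes>\<^sub>M M) (\<lambda>z. (k (fst z) (snd z))\<^sup>2 + (v (fst z))\<^sup>2 * (u (snd z))\<^sup>2)"
      using kernel_L2 by (simp add: case_prod_beta')
    show "AE z in M \<Otimes>\<^sub>M M. norm ((\<lambda>(y, x). k y x * u x * v y) z) \<le>
        norm ((k (fst z) (snd z))\<^sup>2 + (v (fst z))\<^sup>2 * (u (snd z))\<^sup>2)"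
    proof (rule AE_I2)
      fix z
      have "\<bar>k (fst z) (snd z) * (u (snd z) * v (fst z))\<bar> \<le>
          (k (fst z) (snd z))\<^sup>2 + (u (snd z) * v (fst z))\<^sup>2"
        by (rule abs_mult_le_sum_squares)
      then show "norm ((\<lambda>(y, x). k y x * u x * v y) z) \<le>
          norm ((k (fst z) (snd z))\<^sup>2 + (v (fst z))\<^sup>2 * (u (snd z))\<^sup>2)"
        by (simp add: case_prod_beta' power_mult_distrib ac_simps)
    qed
  qed (simp add: case_prod_beta')
  define G where "G x = ipL2 M (\<lambda>y. k y x) v" for x
  define C where "C = (\<integral>(y, x). (k y x)\<^sup>2 \<partial>(M \<Otimes>\<^sub>M M))"
  have bound: "(b a)\<^sup>2 \<le> C" for a
    using sum_le_suminf[of "\<lambda>a. (b a)\<^sup>2" "{a}"] coefficients_power2_sums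
    by (simp add: sums_iff C_def)
  have "summable (\<lambda>a. (b a * ipL2 M v (e a))\<^sup>2)"
  proof (rule summable_comparison_test')
    show "summable (\<lambda>a. C * (ipL2 M v (e a) * ipL2 M v (e a)))"
      using hilbert_basis_Parseval[OF basis v v] by (intro summable_mult sums_summable)
    show "norm ((b a * ipL2 M v (e a))\<^sup>2) \<le> C * (ipL2 M v (e a) * ipL2 M v (e a))" for a
    proof -
      have "norm ((b a * ipL2 M v (e a))\<^sup>2) = (b a)\<^sup>2 * (ipL2 M v (e a))\<^sup>2"
        by (simp add: power_mult_distrib)
      also have "\<dots> \<le> C * (ipL2 M v (e a))\<^sup>2"
        by (rule mult_right_mono[OF bound]) simp
      finally show ?thesis by (simp add: power2_eq_square)
    qed
  qed
  moreover have "(\<lambda>a. (b a * ipL2 M v (e a)) * e a x) sums G x" for x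
    unfolding G_def using orthonormal_series_ipL2_sums[OF orthonormal column_summable _ v, of x]
      kernel_sums by (simp add: ac_simps)
  ultimately have "(\<lambda>a. (b a * ipL2 M v (e a)) * ipL2 M u (e a)) sums ipL2 M G u"
    by (rule orthonormal_series_ipL2_sums[OF orthonormal _ _ u])
  moreover have "ipL2 M G u = (\<integral>(y, x). k y x * u x * v y \<partial>(M \<Otimes>\<^sub>M M))"
    using P.integral_snd[OF product]
    by (simp add: G_def ipL2_def ac_simps flip: integral_mult_left_zero)
  ultimately show ?thesis
    by (simp add: ac_simps)
qed

end

locale diagonal_operator =
  fixes M :: "'a measure" and e :: "nat \<Rightarrow> 'a \<Rightarrow> real"
    and K :: "('a \<Rightarrow> real) \<Rightarrow> 'a \<Rightarrow> real" and b :: "nat \<Rightarrow> real"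
  assumes basis: "hilbert_basis M e"
    and maps_L2: "\<And>u. inL2 M u \<Longrightarrow> inL2 M (K u)"
    and bilinear_sums: "\<And>u v. inL2 M u \<Longrightarrow> inL2 M v \<Longrightarrow>
      (\<lambda>a. b a * ipL2 M u (e a) * ipL2 M v (e a)) sums ipL2 M (K u) v"
begin

lemma orthonormal: "orthonormalL2 M e"
  using basis by (rule hilbert_basis_orthonormalL2)

lemma basis_inL2: "inL2 M (e a)"
  using orthonormal by (rule orthonormalL2_inL2)

lemma ipL2_basis:
  assumes u: "inL2 M u"
  shows "ipL2 M (K u) (e a) = b a * ipL2 M u (e a)"
  using bilinear_sums[OF u basis_inL2, of a]
  by (intro sums_Kronecker_unique) (simp add: orthonormalL2_ipL2[OF orthonormal] eq_commute)

lemma ipL2_basis_basis: "ipL2 M (K (e a)) (e c) = b a * (if a = c then 1 else 0)"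
  using ipL2_basis[OF basis_inL2, of a c] orthonormalL2_ipL2[OF orthonormal, of a c] by simp

lemma symmetric:
  assumes u: "inL2 M u" and v: "inL2 M v"
  shows "ipL2 M (K u) v = ipL2 M u (K v)"
proof -
  have "(\<lambda>a. b a * ipL2 M u (e a) * ipL2 M v (e a)) sums ipL2 M u (K v)"
    using bilinear_sums[OF v u] by (simp add: ipL2_commute[of M u] ac_simps)
  with bilinear_sums[OF u v] show ?thesis
    by (rule sums_unique2)
qed

lemma nonneg:
  assumes b: "\<And>a. b a \<ge> 0" and u: "inL2 M u"
  shows "ipL2 M (K u) u \<ge> 0"
proof -
  have sums: "(\<lambda>a. b a * (ipL2 M u (e a) * ipL2 M u (e a))) sums ipL2 M (K u) u"
    using bilinear_sums[OF u u] by (simp add: mult.assoc)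
  have "0 \<le> b a * (ipL2 M u (e a) * ipL2 M u (e a))" for a
    using b[of a] by simp
  then show ?thesis
    using suminf_nonneg[OF sums_summable[OF sums]] by (simp add: sums_unique[OF sums, symmetric])
qed

lemma expansion:
  assumes u: "inL2 M u"
  shows "(\<lambda>N. normL2 M (\<lambda>y. K u y - (\<Sum>a<N. b a * ipL2 M u (e a) * e a y))) \<longlonglongrightarrow> 0"
  using hilbert_basis_expansion[OF basis maps_L2[OF u]] by (simp add: ipL2_basis[OF u])

lemma eigenfunction: "AE y in M. K (e a) y = b a * e a y"
proof -
  have "(\<Sum>c<N. b c * ipL2 M (e a) (e c) * e c y) = b a * e a y" if "N > a" for N y
  proof -
    have "(\<Sum>c<N. b c * ipL2 M (e a) (e c) * e c y) = (\<Sum>c<N. if c = a then b a * e a y else 0)"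
      by (intro sum.cong) (auto simp: orthonormalL2_ipL2[OF orthonormal])
    then show ?thesis using that by simp
  qed
  then have "eventually (\<lambda>N. normL2 M (\<lambda>y. K (e a) y - (\<Sum>c<N. b c * ipL2 M (e a) (e c) * e c y))
      = normL2 M (\<lambda>y. K (e a) y - b a * e a y)) sequentially"
    by (intro eventually_sequentiallyI[of "Suc a"]) simp
  with expansion[OF basis_inL2, of a]
  have "(\<lambda>N. normL2 M (\<lambda>y. K (e a) y - b a * e a y)) \<longlonglongrightarrow> 0"
    by (rule Lim_transform_eventually)
  then have "normL2 M (\<lambda>y. K (e a) y - b a * e a y) = 0"
    by (simp add: LIMSEQ_const_iff)
  with normL2_eq_0_imp_AE_zero have "AE y in M. K (e a) y - b a * e a y = 0"
    by (metis inL2_diff inL2_cmult maps_L2 basis_inL2)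
  then show ?thesis
    by simp
qed

lemma power2_normL2_sums:
  assumes u: "inL2 M u"
  shows "(\<lambda>a. (b a)\<^sup>2 * (ipL2 M u (e a))\<^sup>2) sums (normL2 M (K u))\<^sup>2"
  using hilbert_basis_Parseval[OF basis maps_L2[OF u] maps_L2[OF u]]
  unfolding power2_normL2 by (simp add: ipL2_basis[OF u] power2_eq_square ac_simps)

lemma power2_normL2_basis: "(normL2 M (K (e a)))\<^sup>2 = (b a)\<^sup>2"
proof -
  have "(\<lambda>c. (b c)\<^sup>2 * (ipL2 M (e a) (e c))\<^sup>2) = (\<lambda>c. (b c)\<^sup>2 * (if c = a then 1 else 0))"
    by (auto simp: orthonormalL2_ipL2[OF orthonormal] fun_eq_iff)
  with power2_normL2_sums[OF basis_inL2, of a]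
  have "(\<lambda>c. (b c)\<^sup>2 * (if c = a then 1 else 0)) sums (normL2 M (K (e a)))\<^sup>2"
    by simp
  then show ?thesis
    by (rule sums_Kronecker_unique)
qed

lemma hilbert_schmidt:
  assumes "summable (\<lambda>a. (b a)\<^sup>2)"
  shows "hilbert_schmidt M K"
  unfolding hilbert_schmidt_def using maps_L2 basis assms by (auto simp: power2_normL2_basis)

end

section \<open>The kernel density estimate pH\<close>

lemma bw_s_pos: "nd > 0 \<Longrightarrow> bw_s nu nd > 0"
  unfolding bw_s_def by simp

lemma bw_hat_s_pos: "nd > 0 \<Longrightarrow> bw_hat_s nu nd > 0"
  unfolding bw_hat_s_def using bw_s_pos[of nd nu]
  by (simp add: add_pos_nonneg)

lemma pH_pos:
  fixes eta :: "nat \<Rightarrow> real ^ 'n"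
  shows "nd > 0 \<Longrightarrow> pH nd eta y > 0"
  unfolding pH_def Let_def using bw_hat_s_pos[of nd "CARD('n)"]
  by (auto intro!: divide_pos_pos sum_pos)

lemma pH_measurable [measurable]: "pH nd eta \<in> borel_measurable borel"
  unfolding pH_def Let_def by measurable

lemma sigma_finite_muH: "sigma_finite_measure (muH nd eta)"
  unfolding muH_def
  by (subst sigma_finite_measure.sigma_finite_iff_density_finite[OF sigma_finite_lborel]) auto

lemma hilbert_basis_muH:
  fixes eta :: "nat \<Rightarrow> real ^ 'n"
  assumes "hilbert_basis lborel q" and "nd > 0"
  shows "hilbert_basis (muH nd eta) (\<lambda>a y. q a y / sqrt (pH nd eta y))"
  unfolding muH_def using assms(2)
  by (intro hilbert_basis_density[OF assms(1)]) (simp_all add: pH_measurable pH_pos)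

lemma transition_density_quotient_sums:
  fixes p :: "'a \<Rightarrow> real"
  assumes p: "\<And>z. p z > 0"
    and rho: "\<forall>s>0. \<forall>y x. summable (\<lambda>a. exp (- lam a * s) * q a y * q a x) \<and>
      rho s y x = sqrt (p y) / sqrt (p x) * (\<Sum>a. exp (- lam a * s) * q a y * q a x)"
    and s: "s > 0"
  shows "(\<lambda>a. exp (- lam a * s) * (q a y / sqrt (p y)) * (q a x / sqrt (p x))) sums
    (rho s y x / p y)"
proof -
  let ?S = "\<Sum>a. exp (- lam a * s) * q a y * q a x"
  have "(\<lambda>a. exp (- lam a * s) * q a y * q a x / (sqrt (p y) * sqrt (p x))) sums
      (?S / (sqrt (p y) * sqrt (p x)))"
    using rho s by (intro sums_divide summable_sums) simp
  moreover have "rho s y x / p y = ?S / (sqrt (p y) * sqrt (p x))"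
  proof -
    have "rho s y x / p y = sqrt (p y) / p y * ?S / sqrt (p x)"
      using rho s by simp
    also have "\<dots> = inverse (sqrt (p y)) * ?S / sqrt (p x)"
      using p[of y] by (subst sqrt_divide_self_eq) simp_all
    also have "\<dots> = ?S / (sqrt (p y) * sqrt (p x))"
      by (simp add: field_simps)
    finally show ?thesis .
  qed
  ultimately show ?thesis
    by simp
qed

theorem proposition2:
  fixes nd :: nat and eta :: "nat \<Rightarrow> real ^ 'n"
    and q :: "nat \<Rightarrow> real ^ 'n \<Rightarrow> real" and lam :: "nat \<Rightarrow> real"
    and rho :: "real \<Rightarrow> real ^ 'n \<Rightarrow> real ^ 'n \<Rightarrow> real"
    and t :: real and c :: real
    and K :: "(real ^ 'n \<Rightarrow> real) \<Rightarrow> (real ^ 'n \<Rightarrow> real)"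
  defines "p \<equiv> pH nd eta"
    and "M \<equiv> muH nd eta"
    and "psi \<equiv> (\<lambda>a y. q a y / sqrt (pH nd eta y))"
    and "k \<equiv> (\<lambda>y x. rho t y x / pH nd eta y)"
    and "b \<equiv> (\<lambda>a. exp (- lam a * t))"
  assumes nd_gt1: "nd > 1"
    and eta_mean: "(1 / real nd) *\<^sub>R (\<Sum>j<nd. eta j) = 0"
    and eta_cov: "\<forall>i j. (1 / (real nd - 1)) * (\<Sum>l<nd. eta l $ i * eta l $ j)
                          = (if i = j then 1 else 0)"
    \<comment> \<open>standing hypotheses on the spectrum of Lhat\<close>
    and lam0: "lam 0 = 0" and lam01: "lam 0 < lam 1" and lam_mono: "mono lam"
    and lam_fin_mult: "\<forall>x. finite {a. lam a = x}"
    and q_reg: "\<forall>a. twice_part_diff (q a)"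
    and q_eig: "\<forall>a y. Lhat nd eta (q a) y = lam a * q a y"
    and q_infty: "\<forall>a. ((\<lambda>y. sqrt (p y) * grad_norm (\<lambda>z. q a z / sqrt (p z)) y)
                         \<longlongrightarrow> 0) at_infinity"
    and q_basis: "hilbert_basis lborel q"
    and q0: "q 0 = (\<lambda>y. sqrt (p y))"
    \<comment> \<open>spectral representation of the transition density\<close>
    and rho_repr: "\<forall>s>0. \<forall>y x. summable (\<lambda>a. exp (- lam a * s) * q a y * q a x) \<and>
                      rho s y x = sqrt (p y) / sqrt (p x) *
                                  (\<Sum>a. exp (- lam a * s) * q a y * q a x)"
    \<comment> \<open>the fixed time t and the operator K_t\<close>
    and t_pos: "t > 0"
    and k_L2: "integrable (M \<Otimes>\<^sub>M M) (\<lambda>(y, x). (k y x)\<^sup>2)"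
    and k_L2_val: "(\<integral>(y, x). (k y x)\<^sup>2 \<partial>(M \<Otimes>\<^sub>M M)) = c\<^sup>2"
    and K_maps: "\<forall>u. inL2 M u \<longrightarrow> inL2 M (K u)"
    and K_linear: "\<forall>u v r s. inL2 M u \<longrightarrow> inL2 M v \<longrightarrow>
                     (AE x in M. K (\<lambda>z. r * u z + s * v z) x = r * K u x + s * K v x)"
    and K_bounded: "\<exists>C. \<forall>u. inL2 M u \<longrightarrow> normL2 M (K u) \<le> C * normL2 M u"
    and K_def: "\<forall>u v. inL2 M u \<longrightarrow> inL2 M v \<longrightarrow>
                  ipL2 M (K u) v = (\<integral>(y, x). k y x * u x * v y \<partial>(M \<Otimes>\<^sub>M M))"
  shows
    \<comment> \<open>(a)\<close>
    "(\<forall>u v. inL2 M u \<longrightarrow> inL2 M v \<longrightarrow>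
        (\<lambda>a. b a * ipL2 M u (psi a) * ipL2 M v (psi a)) sums ipL2 M (K u) v)
     \<and> (\<forall>u v. inL2 M u \<longrightarrow> inL2 M v \<longrightarrow> ipL2 M (K u) v = ipL2 M u (K v))
     \<and> (\<forall>u. inL2 M u \<longrightarrow> ipL2 M (K u) u \<ge> 0)
     \<and> (\<forall>u. inL2 M u \<longrightarrow>
          (\<lambda>N. normL2 M (\<lambda>y. K u y - (\<Sum>a<N. b a * ipL2 M u (psi a) * psi a y)))
            \<longlonglongrightarrow> 0)
     \<comment> \<open>(b)\<close>
     \<and> (\<forall>a. inL2 M (psi a) \<and> b a > 0 \<and> b a = exp (- lam a * t)
              \<and> (AE y in M. K (psi a) y = b a * psi a y))
     \<and> b 0 = 1 \<and> b 0 > b 1 \<and> (\<forall>a\<ge>1. b (Suc a) \<le> b a)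
     \<and> (\<forall>a a'. ipL2 M (K (psi a)) (psi a') = b a * (if a = a' then 1 else 0))
     \<comment> \<open>(c)\<close>
     \<and> (\<forall>u. inL2 M u \<longrightarrow>
          (\<lambda>a. (b a)\<^sup>2 * (ipL2 M u (psi a))\<^sup>2) sums (normL2 M (K u))\<^sup>2)
     \<and> (\<lambda>a. (normL2 M (K (psi a)))\<^sup>2) sums c\<^sup>2
     \<and> (\<lambda>a. (b a)\<^sup>2) sums c\<^sup>2
     \<and> hilbert_schmidt M K"
proof -
  have basis: "hilbert_basis M psi"
    unfolding M_def psi_def using q_basis nd_gt1 by (simp add: hilbert_basis_muH)
  have spectral: "(\<lambda>a. exp (- lam a * s) * psi a y * psi a x) sums (rho s y x / p y)"
    if "s > 0" for s y x
    unfolding psi_def p_def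
    using transition_density_quotient_sums[OF pH_pos rho_repr[unfolded p_def] that] nd_gt1 by simp
  interpret kernel: diagonal_kernel M psi b k
  proof (intro diagonal_kernel.intro diagonal_kernel_axioms.intro)
    show "sigma_finite_measure M"
      unfolding M_def by (rule sigma_finite_muH)
    show "(\<lambda>a. b a * psi a y * psi a x) sums k y x" for y x
      using spectral[OF t_pos] unfolding b_def k_def p_def .
    \<comment> \<open>the spectral representation on the diagonal at time 2t\<close>
    show "summable (\<lambda>a. (b a * psi a x)\<^sup>2)" for x
      using sums_summable[OF spectral[of "2 * t" x x]] t_pos
      by (simp add: b_def power2_eq_square mult_exp_exp ac_simps)
  qed (fact basis k_L2)+
  interpret diagonal_operator M psi K b
    using basis K_maps K_def kernel.bilinear_form_sums by unfold_locales auto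
  have b_sums: "(\<lambda>a. (b a)\<^sup>2) sums c\<^sup>2"
    using kernel.coefficients_power2_sums k_L2_val by simp
  have b_pos: "b a > 0" and b_mono: "b (Suc a) \<le> b a" for a
    using lam_mono t_pos unfolding b_def mono_def by simp_all
  have b01: "b 0 = 1" "b 0 > b 1"
    using lam0 lam01 t_pos unfolding b_def by simp_all
  have norm_sums: "(\<lambda>a. (normL2 M (K (psi a)))\<^sup>2) sums c\<^sup>2"
    using b_sums by (simp only: power2_normL2_basis)
  show ?thesis
    using bilinear_sums symmetric nonneg[OF less_imp_le[OF b_pos]] expansion basis_inL2 b_pos b_def
      eigenfunction b01 b_mono ipL2_basis_basis power2_normL2_sums norm_sums b_sums
      hilbert_schmidt[OF sums_summable[OF b_sums]]
    by blast
qed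

end
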